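(* There are absolute constants $c,C>0$ such that the following holds. Let $G$ be a finite abelian group, let $A\subset G$ be nonempty, and let $\alpha=|A|/|G|$. Then there exist a set of characters $S\subset\hat G$ with $|S|\le C\log(2/\alpha)$, a radius $\rho\ge c/\log(2/\alpha)$, and a positive integer $k\le C\log(2/\alpha)$ such that the Bohr set $B(S,\rho)$ satisfies $B(S,\rho)\subset kA-kA$.
   Context: $\hat G$ is the group of homomorphisms $G\to S^1=\{z\in\mathbb{C}:|z|=1\}$. For $S\subset\hat G$ and $\rho>0$, $B(S,\rho)=\{x\in G:|\gamma(x)-1|\le\rho\text{ for all }\gamma\in S\}$; $|S|$ is its rank and $\rho$ its radius. $kA-kA=\{a_1+\dots+a_k-b_1-\dots-b_k:a_i,b_i\in A\}$. $\log$ is natural. *)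

theory Defs
  imports Complex_Main "HOL-Algebra.Algebra"
begin

definition characters :: "('a, 'b) monoid_scheme \<Rightarrow> ('a \<Rightarrow> complex) set" where
  "characters G = {\<gamma>. \<gamma> \<in> extensional (carrier G)
      \<and> (\<forall>x\<in>carrier G. cmod (\<gamma> x) = 1)
      \<and> (\<forall>x\<in>carrier G. \<forall>y\<in>carrier G. \<gamma> (x \<otimes>\<^bsub>G\<^esub> y) = \<gamma> x * \<gamma> y)}"

definition bohr_set :: "('a, 'b) monoid_scheme \<Rightarrow> ('a \<Rightarrow> complex) set \<Rightarrow> real \<Rightarrow> 'a set" where
  "bohr_set G S \<rho> = {x \<in> carrier G. \<forall>\<gamma>\<in>S. cmod (\<gamma> x - 1) \<le> \<rho>}"

text \<open>k-fold sumset kA (in multiplicative notation: products of k elements of A).\<close>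
fun ksum :: "('a, 'b) monoid_scheme \<Rightarrow> nat \<Rightarrow> 'a set \<Rightarrow> 'a set" where
  "ksum G 0 A = {\<one>\<^bsub>G\<^esub>}"
| "ksum G (Suc k) A = {a \<otimes>\<^bsub>G\<^esub> s | a s. a \<in> A \<and> s \<in> ksum G k A}"

definition kdiff :: "('a, 'b) monoid_scheme \<Rightarrow> nat \<Rightarrow> 'a set \<Rightarrow> 'a set" where
  "kdiff G k A = {x \<otimes>\<^bsub>G\<^esub> inv\<^bsub>G\<^esub> y | x y. x \<in> ksum G k A \<and> y \<in> ksum G k A}"

end

theory Submission
  imports Defs "HOL-Analysis.Harmonic_Numbers"
begin

text \<open>
  Let Spec be the set of characters \<gamma> at which the Fourier coefficient of A has modulus at
  least |A|/2, and let \<Lambda> be a maximal dissociated subset of Spec. Chang's lemma, an exponential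
  moment bound for Riesz products over the dissociated set \<Lambda>, gives |\<Lambda>| \<le> 17 log(2/\<alpha>).
  By maximality, every \<gamma> \<in> Spec is, up to conjugation, a product of elements of \<Lambda> and their
  conjugates, so on the Bohr set B(\<Lambda>, 1/(17 log(2/\<alpha>))) every \<gamma> \<in> Spec has nonnegative real
  part. Now let k = K + 1 and x \<notin> kA - kA. The function |Fourier coefficient of A|^(2k) is the
  transform of a function supported on kA - kA, so its inverse transform vanishes at x: the sum
  over all \<gamma> of |Fourier coefficient at \<gamma>|^(2k) Re \<gamma>(x) is 0. The characters in Spec
  contribute at least |A|^(2k) (the principal character alone does), while by Parseval those
  outside Spec contribute at least -(|A|/2)^(2K) |G| |A|. This is impossible once 4^K > 1/\<alpha>,
  which holds for some K \<le> log(2/\<alpha>) + 1.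
\<close>

section \<open>Elementary estimates\<close>

lemma exp_mult_le_cosh_sinh:
  fixes t u :: real
  assumes "\<bar>u\<bar> \<le> 1"
  shows "exp (t * u) \<le> cosh t + sinh t * u"
proof -
  define \<theta> where "\<theta> = (1 + u) / 2"
  have "0 \<le> \<theta>" "\<theta> \<le> 1" using assms unfolding \<theta>_def by auto
  then have "exp ((1 - \<theta>) *\<^sub>R (- t) + \<theta> *\<^sub>R t) \<le> (1 - \<theta>) * exp (- t) + \<theta> * exp t"
    using convex_onD[OF exp_convex] by blast
  moreover have "(1 - \<theta>) *\<^sub>R (- t) + \<theta> *\<^sub>R t = t * u"
    unfolding \<theta>_def by (simp add: field_simps)
  moreover have "(1 - \<theta>) * exp (- t) + \<theta> * exp t = cosh t + sinh t * u"
    unfolding \<theta>_def cosh_def sinh_def by (simp add: field_simps)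
  ultimately show ?thesis by simp
qed

lemma card_mult_exp_le_sum_exp:
  fixes f :: "'a \<Rightarrow> real"
  assumes "finite A" and mean: "real (card A) * m \<le> (\<Sum>x\<in>A. f x)"
  shows "real (card A) * exp m \<le> (\<Sum>x\<in>A. exp (f x))"
proof -
  have "real (card A) * exp m \<le> exp m * (real (card A) + ((\<Sum>x\<in>A. f x) - real (card A) * m))"
    using mean by (simp add: algebra_simps)
  also have "\<dots> = (\<Sum>x\<in>A. exp m * (1 + (f x - m)))"
    by (simp add: sum.distrib sum_distrib_left sum_subtractf algebra_simps)
  also have "\<dots> \<le> (\<Sum>x\<in>A. exp m * exp (f x - m))"
    by (intro sum_mono mult_left_mono exp_ge_add_one_self) simp
  also have "\<dots> = (\<Sum>x\<in>A. exp (f x))"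
    by (simp add: exp_diff)
  finally show ?thesis .
qed

lemma cosh_quarter_le: "cosh (1/4 :: real) \<le> 169/160"
proof -
  have "exp (1/4 :: real) \<le> 1 + 1/4 + (1/4)\<^sup>2"
    by (rule exp_bound) auto
  moreover have "exp (- (1/4 :: real)) \<le> 4/5"
    using exp_ge_add_one_self[of "1/4 :: real"] by (simp add: exp_minus field_simps)
  ultimately show ?thesis
    by (simp add: cosh_def power2_eq_square)
qed

lemma pow_17_16_mult_cosh_quarter_le: "(17/16) ^ d * cosh (1/4 :: real) ^ d \<le> exp (real d / 8)"
proof -
  have "17/16 * cosh (1/4 :: real) \<le> exp (1/8)"
    using cosh_quarter_le exp_ge_add_one_self[of "1/8 :: real"] by linarith
  then have "(17/16 * cosh (1/4 :: real)) ^ d \<le> exp (1/8) ^ d"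
    by (rule power_mono) (simp add: cosh_real_nonneg)
  also have "\<dots> = exp (real d / 8)"
    by (simp add: exp_of_nat_mult[symmetric])
  finally show ?thesis
    by (simp only: power_mult_distrib)
qed

lemma exists_pow_4_gt:
  fixes n N :: real
  assumes "0 < n" "n \<le> N"
  obtains K :: nat where "N < n * 4 ^ K" "real K \<le> ln (2 * N / n) + 1"
proof -
  define L where "L = ln (2 * N / n)"
  have "2 \<le> 2 * N / n"
    using assms by (simp add: field_simps)
  then have "0 < L" and exp_L: "exp L = 2 * N / n"
    unfolding L_def by simp_all
  define K where "K = nat \<lfloor>L\<rfloor> + 1"
  have "L < real K" "real K \<le> L + 1"
    using \<open>0 < L\<close> unfolding K_def by linarith+
  have "N < n * exp L"
    using exp_L assms by (simp add: field_simps)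
  also have "\<dots> < n * exp (real K)"
    using \<open>L < real K\<close> assms(1) by simp
  also have "exp (real K) = exp 1 ^ K"
    by (simp add: exp_of_nat_mult[symmetric])
  also have "\<dots> \<le> 4 ^ K"
    using exp_le by (intro power_mono) simp_all
  finally have "N < n * 4 ^ K"
    using assms(1) by simp
  with \<open>real K \<le> L + 1\<close> show ?thesis
    using that unfolding L_def by blast
qed

lemma exponent_le_17_ln:
  fixes n N :: real
  assumes "0 < n" "n * (17/16) ^ d \<le> N"
  shows "real d \<le> 17 * ln (N / n)"
proof -
  have "exp (1/17 :: real) \<le> 17/16"
    using exp_ge_add_one_self[of "- (1/17 :: real)"] by (simp add: exp_minus field_simps)
  then have "1/17 \<le> ln (17/16 :: real)"
    by (subst ln_ge_iff) auto
  then have "real d * (1/17) \<le> real d * ln (17/16)"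
    by (rule mult_left_mono) simp
  also have "\<dots> = ln ((17/16) ^ d)"
    by (simp add: ln_realpow)
  also have "\<dots> \<le> ln (N / n)"
  proof (subst ln_le_cancel_iff)
    show "(17/16) ^ d \<le> N / n"
      using assms by (simp add: field_simps)
    then show "0 < N / n"
      by (rule less_le_trans[rotated]) simp
  qed simp
  finally show ?thesis
    by simp
qed

lemma inverse_eq_cnj_if_norm_1:
  assumes "cmod z = 1"
  shows "inverse z = cnj z"
proof (rule inverse_unique)
  show "z * cnj z = 1"
    using complex_norm_square[of z] assms by simp
qed

lemma prod_powi_fun_upd:
  fixes f :: "'b \<Rightarrow> 'c::field"
  assumes "finite L" "\<mu> \<in> L" "\<epsilon> \<mu> = 0"
  shows "(\<Prod>l\<in>L. f l powi (\<epsilon>(\<mu> := e)) l) = f \<mu> powi e * (\<Prod>l\<in>L. f l powi \<epsilon> l)"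
proof -
  have "(\<Prod>l\<in>L - {\<mu>}. f l powi (\<epsilon>(\<mu> := e)) l) = (\<Prod>l\<in>L - {\<mu>}. f l powi \<epsilon> l)"
    by (rule prod.cong) auto
  then show ?thesis
    using assms(3) by (simp add: prod.remove[OF assms(1,2)])
qed

lemma of_real_affine_Re_mult:
  assumes "cmod z = 1"
  shows "complex_of_real (a + b * Re (c * z))
    = of_real a + of_real (b / 2) * c * z + of_real (b / 2) * cnj c * inverse z"
proof -
  have "complex_of_real (Re (c * z)) = (c * z + cnj c * inverse z) / 2"
    using complex_add_cnj[of "c * z"] inverse_eq_cnj_if_norm_1[OF assms] by simp
  then show ?thesis
    by (simp only: of_real_add of_real_mult) (simp add: field_simps)
qed

lemma norm_powi_sub_1_eq:
  assumes "cmod z = 1" "e \<in> {-1, 1}"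
  shows "cmod (z powi e - 1) = cmod (z - 1)"
  using assms inverse_eq_cnj_if_norm_1[OF assms(1)]
  by (auto simp: power_int_minus complex_mod_cnj[of "z - 1", symmetric] simp del: complex_mod_cnj)

lemma norm_powi_sub_1_le:
  assumes "cmod z = 1" "e \<in> {-1, 0, 1}"
  shows "cmod (z powi e - 1) \<le> cmod (z - 1)"
  using assms norm_powi_sub_1_eq[OF assms(1)] by (cases "e = 0") auto

lemma unimodular_nth_root:
  assumes "cmod z = 1" "0 < n"
  obtains w where "cmod w = 1" "w ^ n = z"
proof
  show "cmod (cis (Arg z / real n)) = 1"
    by simp
  have "real n * (Arg z / real n) = Arg z"
    using assms(2) by simp
  then have "cis (Arg z / real n) ^ n = cis (Arg z)"
    by (simp only: Complex.DeMoivre)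
  also have "\<dots> = z"
  proof -
    have "z \<noteq> 0"
      using assms(1) by auto
    then show ?thesis
      using cis_Arg assms(1) by (simp add: sgn_div_norm)
  qed
  finally show "cis (Arg z / real n) ^ n = z" .
qed

lemma cis_two_pi_div_neq_1:
  assumes "2 \<le> n"
  shows "cis (2 * pi / real n) \<noteq> 1"
proof -
  have pos: "0 < 2 * pi / real n" and "2 * pi / real n \<le> pi"
    using assms pi_gt_zero by (simp_all add: field_simps)
  then have "Arg (cis (2 * pi / real n)) = 2 * pi / real n"
    by (intro Arg_cis) auto
  then have "Arg (cis (2 * pi / real n)) \<noteq> 0"
    using pos assms by simp
  then show ?thesis
    by auto
qed

section \<open>Characters of a finite abelian group\<close>

locale finite_comm_group = comm_group G for G (structure) +
  assumes finite_carrier: "finite (carrier G)"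
begin

lemma order_pos: "0 < order G"
  using finite_carrier unfolding order_def by (metis card_gt_0_iff one_closed empty_iff)

lemma left_mult_bij: "a \<in> carrier G \<Longrightarrow> bij_betw (\<lambda>x. a \<otimes> x) (carrier G) (carrier G)"
  by (rule bij_betw_byWitness[where f'="\<lambda>x. inv a \<otimes> x"]) (auto simp: m_assoc[symmetric])

lemma mult_inv_eq_one_iff: "a \<in> carrier G \<Longrightarrow> b \<in> carrier G \<Longrightarrow> a \<otimes> inv b = \<one> \<longleftrightarrow> a = b"
  by (metis inv_closed inv_equality inv_inv r_inv)

lemma sum_multiplicative_eq_0:
  fixes f :: "'a \<Rightarrow> complex"
  assumes mult: "\<And>x y. x \<in> carrier G \<Longrightarrow> y \<in> carrier G \<Longrightarrow> f (x \<otimes> y) = f x * f y"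
    and "a \<in> carrier G" "f a \<noteq> 1"
  shows "(\<Sum>x\<in>carrier G. f x) = 0"
proof -
  have "(\<Sum>x\<in>carrier G. f x) = (\<Sum>x\<in>carrier G. f (a \<otimes> x))"
    using sum.reindex_bij_betw[OF left_mult_bij[OF \<open>a \<in> carrier G\<close>], of f] by simp
  also have "\<dots> = f a * (\<Sum>x\<in>carrier G. f x)"
    using \<open>a \<in> carrier G\<close> by (simp add: mult sum_distrib_left)
  finally show ?thesis
    using \<open>f a \<noteq> 1\<close> by (metis mult_cancel_right1)
qed

lemma character_mult:
  "\<gamma> \<in> characters G \<Longrightarrow> x \<in> carrier G \<Longrightarrow> y \<in> carrier G \<Longrightarrow> \<gamma> (x \<otimes> y) = \<gamma> x * \<gamma> y"
  by (simp add: characters_def)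

lemma character_norm: "\<gamma> \<in> characters G \<Longrightarrow> x \<in> carrier G \<Longrightarrow> cmod (\<gamma> x) = 1"
  by (simp add: characters_def)

lemma character_one:
  assumes "\<gamma> \<in> characters G"
  shows "\<gamma> \<one> = 1"
proof -
  have "\<gamma> \<one> * \<gamma> \<one> = \<gamma> \<one> * 1"
    using character_mult[OF assms, of \<one> \<one>] by simp
  moreover have "\<gamma> \<one> \<noteq> 0"
    using character_norm[OF assms, of \<one>] by auto
  ultimately show ?thesis
    by (metis mult_left_cancel)
qed

lemma character_neq_0: "\<gamma> \<in> characters G \<Longrightarrow> x \<in> carrier G \<Longrightarrow> \<gamma> x \<noteq> 0"
  using character_norm by fastforce

lemma character_cnj: "\<gamma> \<in> characters G \<Longrightarrow> x \<in> carrier G \<Longrightarrow> cnj (\<gamma> x) = inverse (\<gamma> x)"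
  by (simp add: character_norm inverse_eq_cnj_if_norm_1)

lemma character_inv: "\<gamma> \<in> characters G \<Longrightarrow> x \<in> carrier G \<Longrightarrow> \<gamma> (inv x) = cnj (\<gamma> x)"
  using character_mult[of \<gamma> x "inv x"] character_one[of \<gamma>] character_norm[of \<gamma> x]
  by (simp add: character_cnj inverse_unique)

lemma character_pow: "\<gamma> \<in> characters G \<Longrightarrow> x \<in> carrier G \<Longrightarrow> \<gamma> (x [^] (n::nat)) = \<gamma> x ^ n"
  by (induction n) (simp_all add: character_one character_mult)

lemma character_eqI:
  "\<gamma> \<in> characters G \<Longrightarrow> \<delta> \<in> characters G \<Longrightarrow> (\<And>x. x \<in> carrier G \<Longrightarrow> \<gamma> x = \<delta> x) \<Longrightarrow> \<gamma> = \<delta>"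
  unfolding characters_def by (auto intro: extensionalityI)

lemma finite_characters: "finite (characters G)"
proof -
  let ?U = "{z::complex. z ^ order G = 1}"
  have "characters G \<subseteq> PiE (carrier G) (\<lambda>_. ?U)"
  proof
    fix \<gamma> assume \<gamma>: "\<gamma> \<in> characters G"
    have "\<gamma> x ^ order G = 1" if "x \<in> carrier G" for x
      using character_pow[OF \<gamma> that, of "order G"] pow_order_eq_1[OF that] character_one[OF \<gamma>] by simp
    then show "\<gamma> \<in> PiE (carrier G) (\<lambda>_. ?U)"
      using \<gamma> by (auto simp: characters_def PiE_def)
  qed
  moreover have "finite ?U"
    using order_pos by (intro finite_roots_unity) auto
  ultimately show ?thesis
    using finite_PiE[OF finite_carrier, of "\<lambda>_. ?U"] finite_subset by blast
qed

definition principal_character :: "'a \<Rightarrow> complex" where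
  "principal_character = restrict (\<lambda>_. 1) (carrier G)"

lemma principal_character_in_characters: "principal_character \<in> characters G"
  by (simp add: characters_def principal_character_def)

definition character_times :: "('a \<Rightarrow> complex) \<Rightarrow> ('a \<Rightarrow> complex) \<Rightarrow> 'a \<Rightarrow> complex" where
  "character_times \<gamma> \<delta> = restrict (\<lambda>x. \<gamma> x * \<delta> x) (carrier G)"

lemma character_times_in_characters:
  "\<gamma> \<in> characters G \<Longrightarrow> \<delta> \<in> characters G \<Longrightarrow> character_times \<gamma> \<delta> \<in> characters G"
  by (simp add: characters_def character_times_def norm_mult)

lemma character_times_cancel:
  assumes "\<gamma> \<in> characters G" "\<epsilon> \<in> characters G" "\<epsilon>' \<in> characters G"
    and "\<And>x. x \<in> carrier G \<Longrightarrow> \<epsilon> x * \<epsilon>' x = 1"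
  shows "character_times \<epsilon> (character_times \<epsilon>' \<gamma>) = \<gamma>"
proof (rule character_eqI)
  show "character_times \<epsilon> (character_times \<epsilon>' \<gamma>) \<in> characters G"
    using assms by (simp add: character_times_in_characters)
  show "character_times \<epsilon> (character_times \<epsilon>' \<gamma>) x = \<gamma> x" if "x \<in> carrier G" for x
    using that assms(4) by (simp add: character_times_def mult.assoc[symmetric])
qed fact

lemma character_times_bij:
  assumes \<delta>: "\<delta> \<in> characters G"
  shows "bij_betw (character_times \<delta>) (characters G) (characters G)"
proof -
  define \<delta>' where "\<delta>' = restrict (\<lambda>x. cnj (\<delta> x)) (carrier G)"
  have \<delta>': "\<delta>' \<in> characters G"
    using \<delta> by (simp add: characters_def \<delta>'_def)
  have "\<delta>' x * \<delta> x = 1" "\<delta> x * \<delta>' x = 1" if "x \<in> carrier G" for x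
    using that character_neq_0[OF \<delta> that] by (simp_all add: \<delta>'_def character_cnj[OF \<delta>])
  then show ?thesis
    by (intro bij_betw_byWitness[where f'="character_times \<delta>'"])
       (simp_all add: image_subset_iff character_times_in_characters character_times_cancel \<delta> \<delta>')
qed

lemma submonoid_nat_pow_closed: "submonoid H G \<Longrightarrow> h \<in> H \<Longrightarrow> h [^] (n::nat) \<in> H"
  by (induction n) (simp_all add: submonoid.one_closed submonoid.m_closed)

lemma submonoid_inv_closed:
  assumes H: "submonoid H G" and "h \<in> H"
  shows "inv h \<in> H"
proof -
  have h: "h \<in> carrier G"
    using submonoid.mem_carrier[OF H \<open>h \<in> H\<close>] .
  have "h [^] (order G - 1) \<otimes> h = h [^] order G"
    using order_pos by (simp flip: nat_pow_Suc)
  then have "inv h = h [^] (order G - 1)"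
    using pow_order_eq_1[OF h] h by (simp add: inv_equality)
  then show ?thesis
    using submonoid_nat_pow_closed[OF H \<open>h \<in> H\<close>] by simp
qed

lemma submonoid_pow_period:
  assumes H: "submonoid H G" and g: "g \<in> carrier G"
  obtains n :: nat where "0 < n" "\<forall>m. g [^] m \<in> H \<longleftrightarrow> n dvd m"
proof -
  define n where "n = (LEAST n::nat. 0 < n \<and> g [^] n \<in> H)"
  have "0 < order G \<and> g [^] order G \<in> H"
    using order_pos pow_order_eq_1[OF g] submonoid.one_closed[OF H] by simp
  then have n: "0 < n" "g [^] n \<in> H"
    unfolding n_def by (metis (mono_tags, lifting) LeastI)+
  have least: "g [^] r \<notin> H" if "0 < r" "r < n" for r
    using not_less_Least[of r "\<lambda>n. 0 < n \<and> g [^] n \<in> H"] that unfolding n_def by blast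
  have "g [^] m \<in> H \<longleftrightarrow> n dvd m" for m
  proof
    assume m: "g [^] m \<in> H"
    have "g [^] m = (g [^] n) [^] (m div n) \<otimes> g [^] (m mod n)"
      using g by (simp add: nat_pow_pow nat_pow_mult)
    then have "g [^] (m mod n) = inv ((g [^] n) [^] (m div n)) \<otimes> g [^] m"
      using g by (simp add: inv_solve_left)
    then have "g [^] (m mod n) \<in> H"
      using H m n(2) submonoid_inv_closed submonoid_nat_pow_closed submonoid.m_closed by metis
    then show "n dvd m"
      using least[of "m mod n"] n(1) by (meson mod_less_divisor dvd_eq_mod_eq_0 not_gr_zero)
  next
    assume "n dvd m"
    then obtain q where "m = n * q"
      by blast
    moreover have "(g [^] n) [^] q \<in> H"
      using n(2) submonoid_nat_pow_closed[OF H] by blast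
    ultimately show "g [^] m \<in> H"
      using g by (simp add: nat_pow_pow)
  qed
  then show ?thesis
    using n(1) that by blast
qed

definition partial_character :: "'a set \<Rightarrow> ('a \<Rightarrow> complex) \<Rightarrow> bool" where
  "partial_character H \<psi> \<longleftrightarrow>
     (\<forall>x\<in>H. cmod (\<psi> x) = 1) \<and> (\<forall>x\<in>H. \<forall>y\<in>H. \<psi> (x \<otimes> y) = \<psi> x * \<psi> y)"

lemma partial_character_one:
  assumes H: "submonoid H G" and \<psi>: "partial_character H \<psi>"
  shows "\<psi> \<one> = 1"
proof -
  have "\<psi> \<one> * \<psi> \<one> = \<psi> \<one> * 1" and "\<psi> \<one> \<noteq> 0"
    using \<psi> submonoid.one_closed[OF H] unfolding partial_character_def by force+
  then show ?thesis
    by (metis mult_left_cancel)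
qed

lemma partial_character_nat_pow:
  assumes H: "submonoid H G" and \<psi>: "partial_character H \<psi>" and "h \<in> H"
  shows "\<psi> (h [^] (n::nat)) = \<psi> h ^ n"
  using \<psi> \<open>h \<in> H\<close> submonoid_nat_pow_closed[OF H \<open>h \<in> H\<close>]
  by (induction n) (simp_all add: partial_character_one[OF H \<psi>] partial_character_def)

lemma partial_character_coset_consistent:
  assumes H: "submonoid H G" and \<psi>: "partial_character H \<psi>" and g: "g \<in> carrier G"
    and compatible: "\<And>m. g [^] m \<in> H \<Longrightarrow> \<psi> (g [^] m) = w ^ m"
    and "h \<in> H" "h' \<in> H" and eq: "h \<otimes> g [^] i = h' \<otimes> g [^] j"
  shows "\<psi> h * w ^ i = \<psi> h' * w ^ j"
  using \<open>h \<in> H\<close> \<open>h' \<in> H\<close> eq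
proof (induction i j arbitrary: h h' rule: linorder_wlog)
  case (le i j)
  have h: "h \<in> carrier G" and h': "h' \<in> carrier G"
    using le.prems submonoid.mem_carrier[OF H] by auto
  have "h \<otimes> g [^] i = (h' \<otimes> g [^] (j - i)) \<otimes> g [^] i"
    using le g h' by (simp add: m_assoc nat_pow_mult)
  then have hh': "h = h' \<otimes> g [^] (j - i)"
    using g h h' by simp
  then have "g [^] (j - i) = inv h' \<otimes> h"
    using g h' by (simp add: inv_solve_left)
  then have "g [^] (j - i) \<in> H"
    using le.prems H submonoid_inv_closed submonoid.m_closed by metis
  then have "\<psi> h = \<psi> h' * w ^ (j - i)"
    using hh' \<psi> le.prems compatible unfolding partial_character_def by simp
  then show ?case
    using le.hyps by (simp add: mult.assoc flip: power_add)
next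
  case (sym i j)
  show ?case
    using sym.IH[OF sym.prems(2,1) sym.prems(3)[symmetric]] by simp
qed

text \<open>
  The extension to the submonoid generated by H and g sends h \<otimes> g^i to \<psi> h * w^i; the
  compatibility of w with \<psi> on the powers of g in H makes this well defined.
\<close>

lemma partial_character_extend_step:
  assumes H: "submonoid H G" and \<psi>: "partial_character H \<psi>" and g: "g \<in> carrier G"
    and w: "cmod w = 1" and compatible: "\<And>m. g [^] m \<in> H \<Longrightarrow> \<psi> (g [^] m) = w ^ m"
  obtains H' \<psi>' where "submonoid H' G" "partial_character H' \<psi>'" "H \<subseteq> H'" "g \<in> H'"
    "\<And>h. h \<in> H \<Longrightarrow> \<psi>' h = \<psi> h" "\<psi>' g = w"
proof -
  interpret H: submonoid H G by fact
  define H' where "H' = {h \<otimes> g [^] i | h i. h \<in> H \<and> i \<in> (UNIV :: nat set)}"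
  define \<psi>' where "\<psi>' x = (SOME c. \<exists>h\<in>H. \<exists>i::nat. x = h \<otimes> g [^] i \<and> c = \<psi> h * w ^ i)" for x
  have \<psi>': "\<psi>' (h \<otimes> g [^] i) = \<psi> h * w ^ i" if "h \<in> H" for h and i :: nat
    unfolding \<psi>'_def
  proof (rule someI2)
    show "\<exists>h'\<in>H. \<exists>j. h \<otimes> g [^] i = h' \<otimes> g [^] j \<and> \<psi> h * w ^ i = \<psi> h' * w ^ j"
      using that by blast
    show "c = \<psi> h * w ^ i" if "\<exists>h'\<in>H. \<exists>j. h \<otimes> g [^] i = h' \<otimes> g [^] j \<and> c = \<psi> h' * w ^ j" for c
      using that \<open>h \<in> H\<close> partial_character_coset_consistent[OF H \<psi> g compatible] by metis
  qed
  have H'I: "h \<otimes> g [^] i \<in> H'" if "h \<in> H" for h and i :: nat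
    using that unfolding H'_def by blast
  have H'E: "\<exists>h\<in>H. \<exists>i::nat. x = h \<otimes> g [^] i" if "x \<in> H'" for x
    using that unfolding H'_def by blast
  have mult: "(h \<otimes> g [^] i) \<otimes> (h' \<otimes> g [^] j) = (h \<otimes> h') \<otimes> g [^] (i + j)"
    if "h \<in> H" "h' \<in> H" for h h' and i j :: nat
    using that g by (simp add: m_ac nat_pow_mult[symmetric])
  have "submonoid H' G"
  proof
    show "H' \<subseteq> carrier G"
      using g H'E by fastforce
    show "\<one> \<in> H'"
      using H'I[OF H.one_closed, of 0] by simp
    show "x \<otimes> y \<in> H'" if "x \<in> H'" "y \<in> H'" for x y
      using H'E[OF that(1)] H'E[OF that(2)] mult H'I by auto
  qed
  moreover have "partial_character H' \<psi>'"
    unfolding partial_character_def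
  proof (intro conjI ballI)
    show "cmod (\<psi>' x) = 1" if "x \<in> H'" for x
      using H'E[OF that] \<psi> w \<psi>' unfolding partial_character_def by (auto simp: norm_mult norm_power)
    show "\<psi>' (x \<otimes> y) = \<psi>' x * \<psi>' y" if "x \<in> H'" "y \<in> H'" for x y
      using H'E[OF that(1)] H'E[OF that(2)] \<psi> \<psi>' mult unfolding partial_character_def
      by (auto simp: power_add)
  qed
  moreover have "h \<in> H'" and "\<psi>' h = \<psi> h" if "h \<in> H" for h
    using \<psi>'[OF that, of 0] H'I[OF that, of 0] that by simp_all
  moreover have "g \<in> H'" and "\<psi>' g = w"
    using \<psi>'[OF H.one_closed, of 1] H'I[OF H.one_closed, of 1] g partial_character_one[OF H \<psi>]
    by simp_all
  ultimately show ?thesis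
    using that by blast
qed

lemma partial_character_carrier_restrict:
  assumes "partial_character (carrier G) \<psi>"
  shows "restrict \<psi> (carrier G) \<in> characters G"
  using assms by (simp add: characters_def partial_character_def)

lemma partial_character_compatible_root:
  assumes H: "submonoid H G" and \<psi>: "partial_character H \<psi>" and g: "g \<in> carrier G"
  obtains w where "cmod w = 1" "\<forall>m. g [^] m \<in> H \<longrightarrow> \<psi> (g [^] m) = w ^ m"
proof -
  obtain n :: nat where n: "0 < n" and period: "\<forall>m. g [^] m \<in> H \<longleftrightarrow> n dvd m"
    by (rule submonoid_pow_period[OF H g])
  have "cmod (\<psi> (g [^] n)) = 1"
    using \<psi> period unfolding partial_character_def by simp
  then obtain w where w: "cmod w = 1" "w ^ n = \<psi> (g [^] n)"
    using unimodular_nth_root n by metis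
  have "\<psi> (g [^] m) = w ^ m" if gm: "g [^] m \<in> H" for m
  proof -
    obtain q where "m = n * q"
      using period gm by (auto elim: dvdE)
    moreover have "\<psi> ((g [^] n) [^] q) = \<psi> (g [^] n) ^ q"
      using partial_character_nat_pow[OF H \<psi>] period by simp
    ultimately show ?thesis
      using g w(2) by (simp add: nat_pow_pow power_mult)
  qed
  with w(1) show ?thesis
    using that by simp
qed

lemma partial_character_extends:
  assumes "submonoid H G" "partial_character H \<psi>"
  shows "\<exists>\<gamma>\<in>characters G. \<forall>h\<in>H. \<gamma> h = \<psi> h"
  using assms
proof (induction "card (carrier G - H)" arbitrary: H \<psi> rule: less_induct)
  case less
  note H = less.prems(1) and \<psi> = less.prems(2)
  show ?case
  proof (cases "carrier G \<subseteq> H")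
    case True
    then have "H = carrier G"
      using submonoid.subset[OF H] by blast
    then have "restrict \<psi> (carrier G) \<in> characters G"
      using partial_character_carrier_restrict \<psi> by simp
    moreover have "\<forall>h\<in>H. restrict \<psi> (carrier G) h = \<psi> h"
      using \<open>H = carrier G\<close> by simp
    ultimately show ?thesis
      by blast
  next
    case False
    then obtain g where g: "g \<in> carrier G" "g \<notin> H"
      by blast
    obtain w where w: "cmod w = 1" and compatible: "\<forall>m. g [^] m \<in> H \<longrightarrow> \<psi> (g [^] m) = w ^ m"
      by (rule partial_character_compatible_root[OF H \<psi> g(1)])
    obtain H' \<psi>' where H': "submonoid H' G" "partial_character H' \<psi>'" "H \<subseteq> H'" "g \<in> H'"
        and agree: "\<And>h. h \<in> H \<Longrightarrow> \<psi>' h = \<psi> h"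
      using partial_character_extend_step[OF H \<psi> g(1) w compatible[rule_format]] by blast
    have "card (carrier G - H') < card (carrier G - H)"
      using H'(3,4) g finite_carrier by (intro psubset_card_mono) auto
    then obtain \<gamma> where "\<gamma> \<in> characters G" "\<forall>h\<in>H'. \<gamma> h = \<psi>' h"
      using less.hyps[OF _ H'(1,2)] by blast
    moreover have "\<forall>h\<in>H. \<gamma> h = \<psi> h"
      using calculation(2) H'(3) agree by fastforce
    ultimately show ?thesis
      by blast
  qed
qed

lemma character_separates:
  assumes y: "y \<in> carrier G" "y \<noteq> \<one>"
  obtains \<gamma> where "\<gamma> \<in> characters G" "\<gamma> y \<noteq> 1"
proof -
  have H: "submonoid {\<one>} G"
    by (simp add: submonoid_def)
  have \<psi>: "partial_character {\<one>} (\<lambda>_. 1)"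
    by (simp add: partial_character_def)
  obtain n :: nat where "0 < n" and period: "\<forall>m. y [^] m \<in> {\<one>} \<longleftrightarrow> n dvd m"
    by (rule submonoid_pow_period[OF H y(1)])
  then have "2 \<le> n"
    using period[rule_format, of 1] y by (cases "n = 1") auto
  define w where "w = cis (2 * pi / real n)"
  have compatible: "(\<lambda>_. 1) (y [^] m) = w ^ m" if ym: "y [^] m \<in> {\<one>}" for m
  proof -
    obtain q where "m = n * q"
      using period ym by (auto elim: dvdE)
    then have "w ^ m = cis (2 * pi * of_nat q)"
      using \<open>0 < n\<close> unfolding w_def Complex.DeMoivre by (simp add: field_simps)
    then show ?thesis
      by (simp add: cis_multiple_2pi)
  qed
  have "cmod w = 1"
    by (simp add: w_def)
  then obtain H' \<psi>' where H': "submonoid H' G" "partial_character H' \<psi>'" and "y \<in> H'" "\<psi>' y = w"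
    using partial_character_extend_step[OF H \<psi> y(1) _ compatible] by blast
  moreover obtain \<gamma> where "\<gamma> \<in> characters G" "\<forall>h\<in>H'. \<gamma> h = \<psi>' h"
    using partial_character_extends[OF H'] by blast
  ultimately show ?thesis
    using that cis_two_pi_div_neq_1[OF \<open>2 \<le> n\<close>] unfolding w_def by auto
qed

lemma sum_characters:
  assumes y: "y \<in> carrier G"
  shows "(\<Sum>\<gamma>\<in>characters G. \<gamma> y) = (if y = \<one> then of_nat (card (characters G)) else 0)"
proof (cases "y = \<one>")
  case True
  then show ?thesis
    by (simp add: character_one)
next
  case False
  obtain \<delta> where \<delta>: "\<delta> \<in> characters G" "\<delta> y \<noteq> 1"
    using character_separates[OF y False] by blast
  have "(\<Sum>\<gamma>\<in>characters G. \<gamma> y) = (\<Sum>\<gamma>\<in>characters G. character_times \<delta> \<gamma> y)"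
    using sum.reindex_bij_betw[OF character_times_bij[OF \<delta>(1)], of "\<lambda>\<gamma>. \<gamma> y"] by simp
  also have "\<dots> = \<delta> y * (\<Sum>\<gamma>\<in>characters G. \<gamma> y)"
    using y by (simp add: character_times_def sum_distrib_left)
  finally show ?thesis
    using False \<delta>(2) by (metis mult_cancel_right1 mult.commute)
qed

lemma sum_character_mult_cnj:
  assumes \<gamma>: "\<gamma> \<in> characters G" and \<delta>: "\<delta> \<in> characters G"
  shows "(\<Sum>x\<in>carrier G. \<gamma> x * cnj (\<delta> x)) = (if \<gamma> = \<delta> then of_nat (order G) else 0)"
proof (cases "\<gamma> = \<delta>")
  case True
  have "\<delta> x * cnj (\<delta> x) = 1" if "x \<in> carrier G" for x
    using character_neq_0[OF \<delta> that] by (simp add: character_cnj[OF \<delta> that])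
  then show ?thesis
    using True by (simp add: order_def)
next
  case False
  then obtain a where a: "a \<in> carrier G" "\<gamma> a \<noteq> \<delta> a"
    using character_eqI[OF \<gamma> \<delta>] by blast
  have "\<gamma> a * cnj (\<delta> a) \<noteq> 1"
    using a character_neq_0[OF \<delta> a(1)] by (auto simp: character_cnj[OF \<delta>] field_simps)
  then have "(\<Sum>x\<in>carrier G. \<gamma> x * cnj (\<delta> x)) = 0"
    using a(1) by (intro sum_multiplicative_eq_0) (simp_all add: character_mult \<gamma> \<delta>)
  then show ?thesis
    using False by simp
qed

lemma card_characters: "card (characters G) = order G"
proof -
  let ?M = "card (characters G)" and ?N = "order G"
  let ?S = "\<Sum>x\<in>carrier G. \<Sum>\<delta>\<in>characters G. \<Sum>\<gamma>\<in>characters G. \<gamma> x * cnj (\<delta> x)"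
  have "?S = (\<Sum>x\<in>carrier G. (\<Sum>\<gamma>\<in>characters G. \<gamma> x) * cnj (\<Sum>\<delta>\<in>characters G. \<delta> x))"
    by (simp add: sum_distrib_left sum_distrib_right)
  also have "\<dots> = (\<Sum>x\<in>carrier G. if x = \<one> then of_nat ?M * of_nat ?M else 0)"
    by (rule sum.cong) (auto simp: sum_characters)
  finally have "?S = of_nat (?M * ?M)"
    using finite_carrier by simp
  moreover have "?S = (\<Sum>\<delta>\<in>characters G. \<Sum>\<gamma>\<in>characters G. \<Sum>x\<in>carrier G. \<gamma> x * cnj (\<delta> x))"
    by (subst sum.swap, rule sum.cong[OF refl], rule sum.swap)
  then have "?S = of_nat (?M * ?N)"
    using finite_characters by (simp add: sum_character_mult_cnj)
  ultimately have "?M * ?M = ?M * ?N"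
    by (simp only: of_nat_eq_iff)
  moreover have "0 < ?M"
    using finite_characters principal_character_in_characters card_gt_0_iff by blast
  ultimately show ?thesis
    by simp
qed

section \<open>Fourier coefficients and iterated sumsets\<close>

text \<open>The paper's Fourier coefficient of A at \<gamma> is fourier A (cnj \<circ> \<gamma>); only its modulus matters.\<close>

definition fourier :: "'a set \<Rightarrow> ('a \<Rightarrow> complex) \<Rightarrow> complex" where
  "fourier A \<gamma> = (\<Sum>a\<in>A. \<gamma> a)"

lemma fourier_principal_character: "A \<subseteq> carrier G \<Longrightarrow> fourier A principal_character = of_nat (card A)"
  by (simp add: fourier_def principal_character_def subset_iff)

lemma parseval:
  assumes A: "A \<subseteq> carrier G"
  shows "(\<Sum>\<gamma>\<in>characters G. (cmod (fourier A \<gamma>))\<^sup>2) = real (order G) * real (card A)"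
proof -
  have fA: "finite A"
    using A finite_carrier finite_subset by blast
  have "complex_of_real (\<Sum>\<gamma>\<in>characters G. (cmod (fourier A \<gamma>))\<^sup>2)
      = (\<Sum>\<gamma>\<in>characters G. fourier A \<gamma> * cnj (fourier A \<gamma>))"
    by (simp only: of_real_sum complex_norm_square)
  also have "\<dots> = (\<Sum>\<gamma>\<in>characters G. \<Sum>b\<in>A. \<Sum>a\<in>A. \<gamma> a * cnj (\<gamma> b))"
    by (simp add: fourier_def sum_distrib_left sum_distrib_right)
  also have "\<dots> = (\<Sum>\<gamma>\<in>characters G. \<Sum>b\<in>A. \<Sum>a\<in>A. \<gamma> (a \<otimes> inv b))"
    using A by (intro sum.cong refl) (simp add: subset_iff character_mult character_inv)
  also have "\<dots> = (\<Sum>b\<in>A. \<Sum>a\<in>A. \<Sum>\<gamma>\<in>characters G. \<gamma> (a \<otimes> inv b))"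
    by (subst sum.swap, rule sum.cong[OF refl], rule sum.swap)
  also have "\<dots> = (\<Sum>b\<in>A. \<Sum>a\<in>A. if a = b then of_nat (order G) else 0)"
    using A by (intro sum.cong refl) (auto simp: sum_characters card_characters mult_inv_eq_one_iff subset_iff)
  also have "\<dots> = complex_of_real (real (order G) * real (card A))"
    using fA by simp
  finally show ?thesis
    by (simp only: of_real_eq_iff)
qed

lemma fourier_mult_convolution:
  assumes A: "A \<subseteq> carrier G" and \<gamma>: "\<gamma> \<in> characters G"
  shows "fourier A \<gamma> * (\<Sum>y\<in>carrier G. w y * \<gamma> y) = (\<Sum>z\<in>carrier G. (\<Sum>a\<in>A. w (inv a \<otimes> z)) * \<gamma> z)"
proof -
  have shift: "(\<Sum>y\<in>carrier G. \<gamma> a * (w y * \<gamma> y)) = (\<Sum>z\<in>carrier G. w (inv a \<otimes> z) * \<gamma> z)"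
    if a: "a \<in> carrier G" for a
  proof -
    have "(\<Sum>y\<in>carrier G. \<gamma> a * (w y * \<gamma> y)) = (\<Sum>y\<in>carrier G. w y * \<gamma> (a \<otimes> y))"
      using a \<gamma> by (intro sum.cong refl) (simp add: character_mult mult_ac)
    also have "\<dots> = (\<Sum>z\<in>carrier G. w (inv a \<otimes> z) * \<gamma> z)"
      using sum.reindex_bij_betw[OF left_mult_bij[OF inv_closed[OF a]], of "\<lambda>y. w y * \<gamma> (a \<otimes> y)"] a
      by (simp add: m_assoc[symmetric])
    finally show ?thesis .
  qed
  have "fourier A \<gamma> * (\<Sum>y\<in>carrier G. w y * \<gamma> y) = (\<Sum>a\<in>A. \<Sum>y\<in>carrier G. \<gamma> a * (w y * \<gamma> y))"
    by (simp only: fourier_def sum_distrib_left sum_distrib_right) (rule sum.swap)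
  also have "\<dots> = (\<Sum>a\<in>A. \<Sum>z\<in>carrier G. w (inv a \<otimes> z) * \<gamma> z)"
    using A by (intro sum.cong refl shift) blast
  also have "\<dots> = (\<Sum>z\<in>carrier G. \<Sum>a\<in>A. w (inv a \<otimes> z) * \<gamma> z)"
    by (rule sum.swap)
  also have "\<dots> = (\<Sum>z\<in>carrier G. (\<Sum>a\<in>A. w (inv a \<otimes> z)) * \<gamma> z)"
    by (simp only: sum_distrib_right)
  finally show ?thesis .
qed

lemma fourier_power_eq_sum_ksum:
  assumes A: "A \<subseteq> carrier G"
  shows "\<exists>w::'a \<Rightarrow> complex. (\<forall>y. w y \<noteq> 0 \<longrightarrow> y \<in> ksum G k A) \<and>
           (\<forall>\<gamma>\<in>characters G. fourier A \<gamma> ^ k = (\<Sum>y\<in>carrier G. w y * \<gamma> y))"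
proof (induction k)
  case 0
  define w :: "'a \<Rightarrow> complex" where "w y = (if y = \<one> then 1 else 0)" for y
  have "(\<Sum>y\<in>carrier G. w y * \<gamma> y) = (\<Sum>y\<in>carrier G. if y = \<one> then \<gamma> y else 0)" for \<gamma>
    by (rule sum.cong) (auto simp: w_def)
  then have "(\<Sum>y\<in>carrier G. w y * \<gamma> y) = 1" if "\<gamma> \<in> characters G" for \<gamma>
    using finite_carrier character_one[OF that] by simp
  then show ?case
    by (intro exI[of _ w]) (simp add: w_def)
next
  case (Suc k)
  then obtain w where supp: "\<forall>y. w y \<noteq> 0 \<longrightarrow> y \<in> ksum G k A"
    and rep: "\<forall>\<gamma>\<in>characters G. fourier A \<gamma> ^ k = (\<Sum>y\<in>carrier G. w y * \<gamma> y)"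
    by blast
  define w' where "w' z = (if z \<in> carrier G then (\<Sum>a\<in>A. w (inv a \<otimes> z)) else 0)" for z
  have "z \<in> ksum G (Suc k) A" if "w' z \<noteq> 0" for z
  proof -
    have z: "z \<in> carrier G" and "(\<Sum>a\<in>A. w (inv a \<otimes> z)) \<noteq> 0"
      using that unfolding w'_def by (auto split: if_splits)
    then obtain a where a: "a \<in> A" "w (inv a \<otimes> z) \<noteq> 0"
      by (meson sum.neutral)
    have "a \<in> carrier G"
      using a(1) A by blast
    then have "z = a \<otimes> (inv a \<otimes> z)"
      using z by (simp add: m_assoc[symmetric])
    then show ?thesis
      using a supp by auto
  qed
  moreover have "fourier A \<gamma> ^ Suc k = (\<Sum>z\<in>carrier G. w' z * \<gamma> z)" if "\<gamma> \<in> characters G" for \<gamma>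
    using rep that fourier_mult_convolution[OF A that, of w] by (simp add: w'_def)
  ultimately show ?case
    by blast
qed

lemma sum_fourier_moment_eq_0:
  assumes A: "A \<subseteq> carrier G" and x: "x \<in> carrier G" and nx: "x \<notin> kdiff G k A"
  shows "(\<Sum>\<gamma>\<in>characters G. cmod (fourier A \<gamma>) ^ (2 * k) * Re (\<gamma> x)) = 0"
proof -
  obtain w where supp: "\<forall>y. w y \<noteq> 0 \<longrightarrow> y \<in> ksum G k A"
    and rep: "\<forall>\<gamma>\<in>characters G. fourier A \<gamma> ^ k = (\<Sum>y\<in>carrier G. w y * \<gamma> y)"
    using fourier_power_eq_sum_ksum[OF A] by blast
  let ?c = "\<lambda>y z. w y * cnj (w z)" and ?d = "\<lambda>y z. y \<otimes> inv z \<otimes> inv x"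
  have "complex_of_real (cmod (fourier A \<gamma>) ^ (2 * k)) * cnj (\<gamma> x)
      = (\<Sum>z\<in>carrier G. \<Sum>y\<in>carrier G. ?c y z * \<gamma> (?d y z))" if \<gamma>: "\<gamma> \<in> characters G" for \<gamma>
  proof -
    have "complex_of_real (cmod (fourier A \<gamma>) ^ (2 * k)) = complex_of_real ((cmod (fourier A \<gamma>))\<^sup>2) ^ k"
      by (simp add: power_mult)
    also have "\<dots> = fourier A \<gamma> ^ k * cnj (fourier A \<gamma> ^ k)"
      by (simp only: complex_norm_square power_mult_distrib complex_cnj_power)
    finally have "complex_of_real (cmod (fourier A \<gamma>) ^ (2 * k)) = fourier A \<gamma> ^ k * cnj (fourier A \<gamma> ^ k)" .
    then show ?thesis
      using rep \<gamma> x
      by (simp add: sum_distrib_left sum_distrib_right character_mult character_inv mult_ac)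
  qed
  then have "(\<Sum>\<gamma>\<in>characters G. complex_of_real (cmod (fourier A \<gamma>) ^ (2 * k)) * cnj (\<gamma> x))
      = (\<Sum>\<gamma>\<in>characters G. \<Sum>z\<in>carrier G. \<Sum>y\<in>carrier G. ?c y z * \<gamma> (?d y z))"
    by (rule sum.cong[OF refl])
  also have "\<dots> = (\<Sum>z\<in>carrier G. \<Sum>\<gamma>\<in>characters G. \<Sum>y\<in>carrier G. ?c y z * \<gamma> (?d y z))"
    by (rule sum.swap)
  also have "\<dots> = (\<Sum>z\<in>carrier G. \<Sum>y\<in>carrier G. \<Sum>\<gamma>\<in>characters G. ?c y z * \<gamma> (?d y z))"
    by (rule sum.cong[OF refl], rule sum.swap)
  also have "\<dots> = (\<Sum>z\<in>carrier G. \<Sum>y\<in>carrier G. ?c y z * (\<Sum>\<gamma>\<in>characters G. \<gamma> (?d y z)))"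
    by (simp only: sum_distrib_left)
  also have "\<dots> = 0"
  proof (intro sum.neutral ballI)
    fix z y assume z: "z \<in> carrier G" and y: "y \<in> carrier G"
    show "?c y z * (\<Sum>\<gamma>\<in>characters G. \<gamma> (?d y z)) = 0"
    proof (cases "w y = 0 \<or> w z = 0")
      case False
      then have "y \<otimes> inv z \<in> kdiff G k A"
        using supp unfolding kdiff_def by blast
      then have "?d y z \<noteq> \<one>"
        using nx x y z by (auto simp: mult_inv_eq_one_iff)
      then show ?thesis
        using x y z by (simp add: sum_characters)
    qed auto
  qed
  finally have "Re (\<Sum>\<gamma>\<in>characters G. complex_of_real (cmod (fourier A \<gamma>) ^ (2 * k)) * cnj (\<gamma> x)) = 0"
    by simp
  then show ?thesis
    by (simp add: Re_sum)
qed

definition large_spectrum :: "'a set \<Rightarrow> ('a \<Rightarrow> complex) set" where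
  "large_spectrum A = {\<gamma> \<in> characters G. real (card A) / 2 \<le> cmod (fourier A \<gamma>)}"

lemma finite_large_spectrum: "finite (large_spectrum A)"
  using finite_characters by (simp add: large_spectrum_def)

lemma principal_character_in_large_spectrum:
  "A \<subseteq> carrier G \<Longrightarrow> principal_character \<in> large_spectrum A"
  by (simp add: large_spectrum_def fourier_principal_character principal_character_in_characters)

lemma large_spectrum_moment_ge:
  assumes A: "A \<subseteq> carrier G" and x: "x \<in> carrier G"
    and nonneg: "\<And>\<gamma>. \<gamma> \<in> large_spectrum A \<Longrightarrow> 0 \<le> Re (\<gamma> x)"
  shows "real (card A) ^ (2 * k) \<le> (\<Sum>\<gamma>\<in>large_spectrum A. cmod (fourier A \<gamma>) ^ (2 * k) * Re (\<gamma> x))"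
proof -
  have "principal_character x = 1"
    using x by (simp add: principal_character_def)
  then have "real (card A) ^ (2 * k) = cmod (fourier A principal_character) ^ (2 * k) * Re (principal_character x)"
    by (simp add: fourier_principal_character[OF A])
  also have "\<dots> \<le> (\<Sum>\<gamma>\<in>large_spectrum A. cmod (fourier A \<gamma>) ^ (2 * k) * Re (\<gamma> x))"
    using nonneg principal_character_in_large_spectrum[OF A]
    by (intro member_le_sum finite_large_spectrum) simp_all
  finally show ?thesis .
qed

lemma small_spectrum_moment_ge:
  assumes A: "A \<subseteq> carrier G" and x: "x \<in> carrier G"
  shows "- ((real (card A) / 2) ^ (2 * K) * (real (order G) * real (card A)))
    \<le> (\<Sum>\<gamma>\<in>characters G - large_spectrum A. cmod (fourier A \<gamma>) ^ (2 * Suc K) * Re (\<gamma> x))"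
proof -
  let ?F = "\<lambda>\<gamma>. cmod (fourier A \<gamma>)" and ?B = "(real (card A) / 2) ^ (2 * K)"
  have "- (?B * ?F \<gamma> ^ 2) \<le> ?F \<gamma> ^ (2 * Suc K) * Re (\<gamma> x)"
    if "\<gamma> \<in> characters G - large_spectrum A" for \<gamma>
  proof -
    have "\<bar>Re (\<gamma> x)\<bar> \<le> 1"
      using that abs_Re_le_cmod[of "\<gamma> x"] character_norm[OF _ x] by simp
    then have "- (?F \<gamma> ^ (2 * Suc K)) \<le> ?F \<gamma> ^ (2 * Suc K) * Re (\<gamma> x)"
      using mult_left_mono[of "-1" "Re (\<gamma> x)" "?F \<gamma> ^ (2 * Suc K)"] by simp
    moreover have "?F \<gamma> ^ (2 * K) \<le> ?B"
      using that by (intro power_mono) (auto simp: large_spectrum_def)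
    then have "?F \<gamma> ^ (2 * K) * ?F \<gamma> ^ 2 \<le> ?B * ?F \<gamma> ^ 2"
      by (simp add: mult_right_mono)
    moreover have "?F \<gamma> ^ (2 * Suc K) = ?F \<gamma> ^ (2 * K) * ?F \<gamma> ^ 2"
      by (simp add: power_add[symmetric])
    ultimately show ?thesis
      by linarith
  qed
  then have "(\<Sum>\<gamma>\<in>characters G - large_spectrum A. - (?B * ?F \<gamma> ^ 2))
      \<le> (\<Sum>\<gamma>\<in>characters G - large_spectrum A. ?F \<gamma> ^ (2 * Suc K) * Re (\<gamma> x))"
    by (rule sum_mono)
  moreover have "(\<Sum>\<gamma>\<in>characters G - large_spectrum A. ?B * ?F \<gamma> ^ 2)
      = ?B * (\<Sum>\<gamma>\<in>characters G - large_spectrum A. ?F \<gamma> ^ 2)"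
    by (rule sum_distrib_left[symmetric])
  moreover have "(\<Sum>\<gamma>\<in>characters G - large_spectrum A. ?F \<gamma> ^ 2) \<le> (\<Sum>\<gamma>\<in>characters G. ?F \<gamma> ^ 2)"
    by (rule sum_mono2[OF finite_characters]) auto
  then have "?B * (\<Sum>\<gamma>\<in>characters G - large_spectrum A. ?F \<gamma> ^ 2) \<le> ?B * (\<Sum>\<gamma>\<in>characters G. ?F \<gamma> ^ 2)"
    by (rule mult_left_mono) simp
  ultimately show ?thesis
    using parseval[OF A] by (simp add: sum_negf)
qed

lemma nonneg_on_large_spectrum_imp_kdiff:
  assumes A: "A \<subseteq> carrier G" "A \<noteq> {}" and big: "real (order G) < real (card A) * 4 ^ K"
    and x: "x \<in> carrier G" and nonneg: "\<And>\<gamma>. \<gamma> \<in> large_spectrum A \<Longrightarrow> 0 \<le> Re (\<gamma> x)"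
  shows "x \<in> kdiff G (Suc K) A"
proof (rule ccontr)
  assume "x \<notin> kdiff G (Suc K) A"
  define n where "n = real (card A)"
  have "0 < n"
    using A finite_carrier finite_subset unfolding n_def by (simp add: card_gt_0_iff)
  let ?f = "\<lambda>\<gamma>. cmod (fourier A \<gamma>) ^ (2 * Suc K) * Re (\<gamma> x)"
  have "large_spectrum A \<subseteq> characters G"
    by (auto simp: large_spectrum_def)
  then have "(\<Sum>\<gamma>\<in>characters G. ?f \<gamma>)
      = (\<Sum>\<gamma>\<in>large_spectrum A. ?f \<gamma>) + (\<Sum>\<gamma>\<in>characters G - large_spectrum A. ?f \<gamma>)"
    using sum.subset_diff[OF _ finite_characters] by (simp add: add.commute)
  moreover have "n ^ (2 * Suc K) \<le> (\<Sum>\<gamma>\<in>large_spectrum A. ?f \<gamma>)"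
    unfolding n_def by (rule large_spectrum_moment_ge[OF A(1) x]) (erule nonneg)
  ultimately have "n ^ (2 * Suc K) \<le> (n / 2) ^ (2 * K) * (real (order G) * n)"
    using sum_fourier_moment_eq_0[OF A(1) x \<open>x \<notin> _\<close>] small_spectrum_moment_ge[OF A(1) x, of K]
    unfolding n_def by linarith
  moreover have "(n / 2) ^ (2 * K) = n ^ (2 * K) / 4 ^ K"
    by (simp add: power_divide power_mult)
  moreover have "n ^ (2 * Suc K) = n ^ (2 * K) * (n * n)"
    by (simp add: power_add[symmetric] power2_eq_square[symmetric])
  ultimately have "n ^ (2 * K) * (n * n) * 4 ^ K \<le> n ^ (2 * K) * (real (order G) * n)"
    by (simp only:) (simp add: field_simps)
  then have "n ^ (2 * K) * n * (n * 4 ^ K) \<le> n ^ (2 * K) * n * real (order G)"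
    by (simp add: mult_ac)
  then have "n * 4 ^ K \<le> real (order G)"
    using \<open>0 < n\<close> by (simp add: mult_le_cancel_left_pos)
  then show False
    using big unfolding n_def by simp
qed

section \<open>Dissociated sets and Chang's lemma\<close>

definition dissociated :: "('a \<Rightarrow> complex) set \<Rightarrow> bool" where
  "dissociated L \<longleftrightarrow> L \<subseteq> characters G \<and>
     (\<forall>\<epsilon> :: ('a \<Rightarrow> complex) \<Rightarrow> int. (\<forall>l\<in>L. \<epsilon> l \<in> {-1, 0, 1}) \<and>
        (\<forall>x\<in>carrier G. (\<Prod>l\<in>L. l x powi \<epsilon> l) = 1) \<longrightarrow> (\<forall>l\<in>L. \<epsilon> l = 0))"

lemma dissociated_subset_characters: "dissociated L \<Longrightarrow> L \<subseteq> characters G"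
  by (simp add: dissociated_def)

lemma finite_dissociated: "dissociated L \<Longrightarrow> finite L"
  using dissociated_subset_characters finite_characters finite_subset by blast

lemma sum_dissociated_monomial:
  assumes L: "dissociated L" and \<epsilon>: "\<forall>l\<in>L. \<epsilon> l \<in> {-1, 0, 1}"
  shows "(\<Sum>x\<in>carrier G. \<Prod>l\<in>L. l x powi \<epsilon> l) = (if \<forall>l\<in>L. \<epsilon> l = 0 then of_nat (order G) else 0)"
proof (cases "\<forall>l\<in>L. \<epsilon> l = 0")
  case True
  then show ?thesis
    by (simp add: order_def)
next
  case False
  then obtain a where a: "a \<in> carrier G" "(\<Prod>l\<in>L. l a powi \<epsilon> l) \<noteq> 1"
    using L \<epsilon> unfolding dissociated_def by blast
  have mult: "(\<Prod>l\<in>L. l (x \<otimes> y) powi \<epsilon> l) = (\<Prod>l\<in>L. l x powi \<epsilon> l) * (\<Prod>l\<in>L. l y powi \<epsilon> l)"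
    if "x \<in> carrier G" "y \<in> carrier G" for x y
    using that dissociated_subset_characters[OF L]
    by (simp add: subset_iff character_mult power_int_mult_distrib prod.distrib)
  show ?thesis
    using sum_multiplicative_eq_0[where f="\<lambda>x. \<Prod>l\<in>L. l x powi \<epsilon> l", OF mult a] False by auto
qed

text \<open>
  Riesz products: expanding a + b Re(c l(x)) = a + (b/2) c l(x) + (b/2) cnj(c) l(x)^-1 over T,
  dissociativity kills every monomial but the constant one. The extra factor, with exponents
  vanishing on T, is the invariant that makes the induction on T go through.
\<close>

lemma sum_twisted_riesz_product:
  fixes a b :: real and c :: "('a \<Rightarrow> complex) \<Rightarrow> complex"
  assumes L: "dissociated L" and "T \<subseteq> L"
    and "\<forall>l\<in>L. \<epsilon> l \<in> {-1, 0, 1}" and "\<forall>l\<in>T. \<epsilon> l = 0"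
  shows "(\<Sum>x\<in>carrier G. (\<Prod>l\<in>L. l x powi \<epsilon> l) * (\<Prod>l\<in>T. complex_of_real (a + b * Re (c l * l x))))
      = (if \<forall>l\<in>L. \<epsilon> l = 0 then of_nat (order G) * of_real a ^ card T else 0)"
proof -
  have "finite T"
    using assms(2) finite_dissociated[OF L] finite_subset by blast
  then show ?thesis
    using assms(2-4)
  proof (induction T arbitrary: \<epsilon> rule: finite_induct)
    case empty
    then show ?case
      using sum_dissociated_monomial[OF L] by simp
  next
    case (insert \<mu> T)
    let ?P = "\<lambda>\<epsilon> x. \<Prod>l\<in>L. l x powi \<epsilon> l"
    let ?F = "\<lambda>x. \<Prod>l\<in>T. complex_of_real (a + b * Re (c l * l x))"
    let ?S = "\<lambda>\<epsilon>. \<Sum>x\<in>carrier G. ?P \<epsilon> x * ?F x"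
    have \<mu>: "\<mu> \<in> L" "\<mu> \<in> characters G" and "\<epsilon> \<mu> = 0"
      using insert.prems dissociated_subset_characters[OF L] by auto
    have shift: "?P (\<epsilon>(\<mu> := e)) x = \<mu> x powi e * ?P \<epsilon> x" for e x
      using prod_powi_fun_upd[where L = L and \<mu> = \<mu> and \<epsilon> = \<epsilon> and f = "\<lambda>l. l x",
          OF finite_dissociated[OF L] \<mu>(1) \<open>\<epsilon> \<mu> = 0\<close>] by simp
    define B where "B = complex_of_real (b / 2) * c \<mu>"
    define B' where "B' = complex_of_real (b / 2) * cnj (c \<mu>)"
    have pointwise: "complex_of_real (a + b * Re (c \<mu> * \<mu> x)) * ?P \<epsilon> x
        = of_real a * ?P \<epsilon> x + B * ?P (\<epsilon>(\<mu> := 1)) x + B' * ?P (\<epsilon>(\<mu> := -1)) x"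
      if "x \<in> carrier G" for x
      unfolding of_real_affine_Re_mult[OF character_norm[OF \<mu>(2) that]] shift B_def B'_def
      by (simp add: algebra_simps power_int_minus)
    have "(\<Sum>x\<in>carrier G. ?P \<epsilon> x * (\<Prod>l\<in>insert \<mu> T. complex_of_real (a + b * Re (c l * l x))))
        = (\<Sum>x\<in>carrier G. (complex_of_real (a + b * Re (c \<mu> * \<mu> x)) * ?P \<epsilon> x) * ?F x)"
      using insert.hyps by (simp add: mult_ac)
    also have "\<dots> = (\<Sum>x\<in>carrier G. of_real a * (?P \<epsilon> x * ?F x)
        + B * (?P (\<epsilon>(\<mu> := 1)) x * ?F x) + B' * (?P (\<epsilon>(\<mu> := -1)) x * ?F x))"
      by (rule sum.cong[OF refl]) (simp only: pointwise distrib_right mult.assoc)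
    also have "\<dots> = of_real a * ?S \<epsilon> + B * ?S (\<epsilon>(\<mu> := 1)) + B' * ?S (\<epsilon>(\<mu> := -1))"
      by (simp add: sum.distrib sum_distrib_left)
    finally have expand: "(\<Sum>x\<in>carrier G. ?P \<epsilon> x * (\<Prod>l\<in>insert \<mu> T. complex_of_real (a + b * Re (c l * l x))))
        = of_real a * ?S \<epsilon> + B * ?S (\<epsilon>(\<mu> := 1)) + B' * ?S (\<epsilon>(\<mu> := -1))" .
    have TL: "T \<subseteq> L"
      using insert.prems(1) by simp
    have "?S (\<epsilon>(\<mu> := e)) = 0" if e: "e \<in> {-1, 1}" for e
    proof -
      have "\<forall>l\<in>L. (\<epsilon>(\<mu> := e)) l \<in> {-1, 0, 1}" and "\<forall>l\<in>T. (\<epsilon>(\<mu> := e)) l = 0"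
        using insert.prems insert.hyps(2) e by auto
      note IH = insert.IH[OF TL this]
      have "\<not> (\<forall>l\<in>L. (\<epsilon>(\<mu> := e)) l = 0)"
        using \<mu>(1) e by auto
      then show ?thesis
        using IH by (simp only: if_not_P if_False)
    qed
    moreover have "\<forall>l\<in>T. \<epsilon> l = 0"
      using insert.prems(3) by simp
    note IH = insert.IH[OF TL insert.prems(2) this]
    ultimately show ?case
      using expand IH insert.hyps by simp
  qed
qed

lemma sum_exp_dissociated_le:
  fixes t :: real and c :: "('a \<Rightarrow> complex) \<Rightarrow> complex"
  assumes L: "dissociated L" and c: "\<And>l. l \<in> L \<Longrightarrow> cmod (c l) = 1"
  shows "(\<Sum>x\<in>carrier G. exp (t * (\<Sum>l\<in>L. Re (c l * l x)))) \<le> real (order G) * cosh t ^ card L"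
proof -
  let ?u = "\<lambda>l x. Re (c l * l x)"
  have "exp (t * (\<Sum>l\<in>L. ?u l x)) \<le> (\<Prod>l\<in>L. cosh t + sinh t * ?u l x)" if x: "x \<in> carrier G" for x
  proof -
    have "exp (t * (\<Sum>l\<in>L. ?u l x)) = (\<Prod>l\<in>L. exp (t * ?u l x))"
      by (simp add: exp_sum[OF finite_dissociated[OF L]] sum_distrib_left)
    also have "\<dots> \<le> (\<Prod>l\<in>L. cosh t + sinh t * ?u l x)"
    proof (rule prod_mono)
      fix l assume "l \<in> L"
      then have "cmod (c l * l x) = 1"
        using c character_norm[OF _ x] dissociated_subset_characters[OF L] by (auto simp: norm_mult)
      then have "\<bar>?u l x\<bar> \<le> 1"
        using abs_Re_le_cmod by metis
      then show "0 \<le> exp (t * ?u l x) \<and> exp (t * ?u l x) \<le> cosh t + sinh t * ?u l x"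
        using exp_mult_le_cosh_sinh by simp
    qed
    finally show ?thesis .
  qed
  then have "(\<Sum>x\<in>carrier G. exp (t * (\<Sum>l\<in>L. ?u l x))) \<le> (\<Sum>x\<in>carrier G. \<Prod>l\<in>L. cosh t + sinh t * ?u l x)"
    by (rule sum_mono)
  also have "\<dots> = real (order G) * cosh t ^ card L"
  proof -
    have "complex_of_real (\<Sum>x\<in>carrier G. \<Prod>l\<in>L. cosh t + sinh t * ?u l x)
        = (\<Sum>x\<in>carrier G. (\<Prod>l\<in>L. l x powi 0) * (\<Prod>l\<in>L. complex_of_real (cosh t + sinh t * ?u l x)))"
      by simp
    also have "\<dots> = complex_of_real (real (order G) * cosh t ^ card L)"
      using sum_twisted_riesz_product[OF L order_refl, of "\<lambda>_. 0"] by simp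
    finally show ?thesis
      by (simp only: of_real_eq_iff)
  qed
  finally show ?thesis .
qed

text \<open>
  Chang's lemma, via the exponential moment at t = 1/4; the constant 17/16 is what is left of
  exp(1/8)/cosh(1/4).
\<close>

lemma maximal_dissociated_subset:
  assumes "S \<subseteq> characters G"
  obtains \<Lambda> where "\<Lambda> \<subseteq> S" "dissociated \<Lambda>" "\<forall>\<gamma>\<in>S. dissociated (insert \<gamma> \<Lambda>) \<longrightarrow> \<gamma> \<in> \<Lambda>"
proof -
  let ?D = "{\<Lambda>. \<Lambda> \<subseteq> S \<and> dissociated \<Lambda>}"
  have "finite ?D"
    using assms finite_characters finite_subset by (auto intro: finite_subset[of _ "Pow S"])
  moreover have "{} \<in> ?D"
    by (simp add: dissociated_def)
  ultimately obtain \<Lambda> where "\<Lambda> \<in> ?D" and maximal: "\<forall>\<Lambda>'\<in>?D. \<Lambda> \<subseteq> \<Lambda>' \<longrightarrow> \<Lambda> = \<Lambda>'"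
    using finite_has_maximal[of ?D] by blast
  moreover have "\<forall>\<gamma>\<in>S. dissociated (insert \<gamma> \<Lambda>) \<longrightarrow> \<gamma> \<in> \<Lambda>"
    using maximal \<open>\<Lambda> \<in> ?D\<close> by blast
  ultimately show ?thesis
    using that by blast
qed

lemma dissociated_large_spectrum_card_le:
  assumes A: "A \<subseteq> carrier G" "A \<noteq> {}" and L: "dissociated L" "L \<subseteq> large_spectrum A"
  shows "real (card A) * (17/16) ^ card L \<le> real (order G)"
proof -
  let ?F = "fourier A" and ?d = "card L"
  have "0 < card A"
    using A finite_carrier finite_subset by (simp add: card_gt_0_iff)
  then have F_pos: "0 < cmod (?F l)" and F_ge: "real (card A) / 2 \<le> cmod (?F l)" if "l \<in> L" for l
    using that L(2) by (auto simp: large_spectrum_def)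
  define c where "c l = cnj (?F l) / complex_of_real (cmod (?F l))" for l
  have c_norm: "cmod (c l) = 1" if "l \<in> L" for l
    using F_pos[OF that] by (simp add: c_def norm_divide)
  have cF: "c l * ?F l = complex_of_real (cmod (?F l))" if "l \<in> L" for l
    using F_pos[OF that] complex_norm_square[of "?F l"]
    by (simp add: c_def field_simps power2_eq_square)
  define \<Phi> where "\<Phi> x = (\<Sum>l\<in>L. Re (c l * l x))" for x
  have "(\<Sum>x\<in>A. \<Phi> x) = (\<Sum>l\<in>L. \<Sum>x\<in>A. Re (c l * l x))"
    unfolding \<Phi>_def by (rule sum.swap)
  also have "\<dots> = (\<Sum>l\<in>L. Re (c l * ?F l))"
    by (simp only: fourier_def sum_distrib_left Re_sum)
  also have "\<dots> = (\<Sum>l\<in>L. cmod (?F l))"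
    by (rule sum.cong) (simp_all add: cF)
  also have "\<dots> \<ge> real ?d * (real (card A) / 2)"
    using sum_mono[of L "\<lambda>_. real (card A) / 2", OF F_ge] by simp
  finally have "real ?d * (real (card A) / 2) \<le> (\<Sum>x\<in>A. \<Phi> x)" .
  moreover have "(\<Sum>x\<in>A. 1/4 * \<Phi> x) = (\<Sum>x\<in>A. \<Phi> x) / 4"
    by (simp add: sum_divide_distrib)
  moreover have "real (card A) * (real ?d / 8) = real ?d * (real (card A) / 2) / 4"
    by simp
  ultimately have "real (card A) * (real ?d / 8) \<le> (\<Sum>x\<in>A. 1/4 * \<Phi> x)"
    by linarith
  then have "real (card A) * exp (real ?d / 8) \<le> (\<Sum>x\<in>A. exp (1/4 * \<Phi> x))"
    using A finite_carrier finite_subset by (intro card_mult_exp_le_sum_exp) auto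
  also have "\<dots> \<le> (\<Sum>x\<in>carrier G. exp (1/4 * \<Phi> x))"
    using A finite_carrier by (intro sum_mono2) auto
  also have "\<dots> \<le> real (order G) * cosh (1/4) ^ ?d"
    unfolding \<Phi>_def by (rule sum_exp_dissociated_le[OF L(1) c_norm])
  finally have main: "real (card A) * exp (real ?d / 8) \<le> real (order G) * cosh (1/4) ^ ?d" .
  have "(17/16) ^ ?d * cosh (1/4 :: real) ^ ?d \<le> exp (real ?d / 8)"
    by (rule pow_17_16_mult_cosh_quarter_le)
  then have "real (card A) * (17/16) ^ ?d * cosh (1/4) ^ ?d \<le> real (order G) * cosh (1/4) ^ ?d"
    using main by (smt (verit) mult.assoc mult_left_mono of_nat_0_le_iff)
  then show ?thesis
    by (simp add: cosh_real_pos)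
qed

section \<open>Bohr sets inside kA - kA\<close>

text \<open>
  If insert \<gamma> L is not dissociated, a nontrivial relation must involve \<gamma>, so \<gamma> or its
  conjugate is a {-1,0,1}-combination of L.
\<close>

lemma norm_character_sub_1_le_sum:
  assumes L: "dissociated L" and \<gamma>: "\<gamma> \<in> characters G" and x: "x \<in> carrier G"
    and maximal: "dissociated (insert \<gamma> L) \<Longrightarrow> \<gamma> \<in> L"
  shows "cmod (\<gamma> x - 1) \<le> (\<Sum>l\<in>L. cmod (l x - 1))"
proof (cases "\<gamma> \<in> L")
  case True
  then show ?thesis
    using finite_dissociated[OF L] by (intro member_le_sum) auto
next
  case False
  have LG: "insert \<gamma> L \<subseteq> characters G"
    using \<gamma> dissociated_subset_characters[OF L] by blast
  then obtain \<epsilon> :: "('a \<Rightarrow> complex) \<Rightarrow> int" where \<epsilon>: "\<forall>l\<in>insert \<gamma> L. \<epsilon> l \<in> {-1, 0, 1}"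
    and trivial: "\<forall>y\<in>carrier G. (\<Prod>l\<in>insert \<gamma> L. l y powi \<epsilon> l) = 1"
    and nonzero: "\<not> (\<forall>l\<in>insert \<gamma> L. \<epsilon> l = 0)"
    using maximal False unfolding dissociated_def by blast
  have split: "(\<Prod>l\<in>insert \<gamma> L. l y powi \<epsilon> l) = \<gamma> y powi \<epsilon> \<gamma> * (\<Prod>l\<in>L. l y powi \<epsilon> l)" for y
    using finite_dissociated[OF L] False by simp
  have "\<epsilon> \<gamma> \<noteq> 0"
  proof
    assume "\<epsilon> \<gamma> = 0"
    then have "\<forall>l\<in>L. \<epsilon> l = 0"
      using L \<epsilon> trivial split unfolding dissociated_def by auto
    then show False
      using nonzero \<open>\<epsilon> \<gamma> = 0\<close> by auto
  qed
  define q where "q = \<gamma> x powi \<epsilon> \<gamma>"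
  define p where "p = (\<Prod>l\<in>L. l x powi \<epsilon> l)"
  have unit: "cmod (l x) = 1" if "l \<in> insert \<gamma> L" for l
    using LG that character_norm[OF _ x] by blast
  have "cmod (\<gamma> x - 1) = cmod (q - 1)"
    using \<epsilon> \<open>\<epsilon> \<gamma> \<noteq> 0\<close> norm_powi_sub_1_eq[OF unit[of \<gamma>]] unfolding q_def by auto
  also have "q - 1 = q * (1 - p)"
    using trivial split x unfolding p_def q_def by (simp add: algebra_simps)
  then have "cmod (q - 1) = cmod (p - 1)"
    using unit[of \<gamma>] by (simp add: q_def norm_mult norm_power_int norm_minus_commute)
  also have "cmod (p - 1) \<le> (\<Sum>l\<in>L. cmod (l x powi \<epsilon> l - 1))"
    using norm_prod_diff[of L "\<lambda>l. l x powi \<epsilon> l" "\<lambda>_. 1"] unit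
    unfolding p_def by (simp add: norm_power_int)
  also have "\<dots> \<le> (\<Sum>l\<in>L. cmod (l x - 1))"
    using \<epsilon> unit norm_powi_sub_1_le by (intro sum_mono) auto
  finally show ?thesis .
qed

lemma ln_2_le_ln_ratio:
  assumes A: "A \<subseteq> carrier G" "A \<noteq> {}"
  shows "ln 2 \<le> ln (2 * real (order G) / real (card A))"
proof -
  have "0 < card A"
    using A finite_carrier finite_subset by (simp add: card_gt_0_iff)
  moreover have "card A \<le> order G"
    using A finite_carrier unfolding order_def by (simp add: card_mono)
  ultimately have "2 \<le> 2 * real (order G) / real (card A)"
    by (simp add: field_simps)
  then show ?thesis
    by simp
qed

lemma bohr_set_subset_kdiff:
  assumes A: "A \<subseteq> carrier G" "A \<noteq> {}"
  defines "L \<equiv> ln (2 * real (order G) / real (card A))"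
  obtains S k where "S \<subseteq> characters G" "real (card S) \<le> 17 * L" "1 \<le> k" "real k \<le> L + 2"
    "bohr_set G S (1 / (17 * L)) \<subseteq> kdiff G k A"
proof -
  have "0 < card A"
    using A finite_carrier finite_subset by (simp add: card_gt_0_iff)
  moreover have "card A \<le> order G"
    using A finite_carrier unfolding order_def by (simp add: card_mono)
  ultimately have "0 < real (card A)" "real (card A) \<le> real (order G)"
    by simp_all
  then obtain K where big: "real (order G) < real (card A) * 4 ^ K" and "real K \<le> L + 1"
    unfolding L_def by (rule exists_pow_4_gt)
  have "0 < L"
    using ln_2_le_ln_ratio[OF A] ln_gt_zero[of 2] unfolding L_def by linarith
  have "large_spectrum A \<subseteq> characters G"
    by (auto simp: large_spectrum_def)
  then obtain \<Lambda> where \<Lambda>: "\<Lambda> \<subseteq> large_spectrum A" "dissociated \<Lambda>"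
    and maximal: "\<forall>\<gamma>\<in>large_spectrum A. dissociated (insert \<gamma> \<Lambda>) \<longrightarrow> \<gamma> \<in> \<Lambda>"
    by (rule maximal_dissociated_subset)
  have "real (card \<Lambda>) \<le> 17 * ln (real (order G) / real (card A))"
    using dissociated_large_spectrum_card_le[OF A \<Lambda>(2,1)] \<open>0 < card A\<close>
    by (intro exponent_le_17_ln) simp_all
  also have "\<dots> \<le> 17 * L"
    using \<open>0 < card A\<close> order_pos unfolding L_def by (simp add: divide_right_mono)
  finally have card_\<Lambda>: "real (card \<Lambda>) \<le> 17 * L" .
  have "bohr_set G \<Lambda> (1 / (17 * L)) \<subseteq> kdiff G (Suc K) A"
  proof
    fix x assume "x \<in> bohr_set G \<Lambda> (1 / (17 * L))"
    then have x: "x \<in> carrier G" and close: "\<And>l. l \<in> \<Lambda> \<Longrightarrow> cmod (l x - 1) \<le> 1 / (17 * L)"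
      unfolding bohr_set_def by auto
    show "x \<in> kdiff G (Suc K) A"
    proof (rule nonneg_on_large_spectrum_imp_kdiff[OF A big x])
      fix \<gamma> assume \<gamma>: "\<gamma> \<in> large_spectrum A"
      then have "cmod (\<gamma> x - 1) \<le> (\<Sum>l\<in>\<Lambda>. cmod (l x - 1))"
        using norm_character_sub_1_le_sum[OF \<Lambda>(2) _ x] maximal \<open>large_spectrum A \<subseteq> _\<close> by blast
      also have "\<dots> \<le> (\<Sum>l\<in>\<Lambda>. 1 / (17 * L))"
        by (rule sum_mono) (rule close)
      also have "\<dots> \<le> 1"
        using card_\<Lambda> \<open>0 < L\<close> by (simp add: field_simps)
      finally show "0 \<le> Re (\<gamma> x)"
        using abs_Re_le_cmod[of "\<gamma> x - 1"] by simp
    qed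
  qed
  with \<Lambda>(1) \<open>large_spectrum A \<subseteq> _\<close> card_\<Lambda> \<open>real K \<le> L + 1\<close> show ?thesis
    using that[of \<Lambda> "Suc K"] by simp
qed

end

theorem lemmaB14:
  shows "\<exists>c C::real. c > 0 \<and> C > 0 \<and>
    (\<forall>(G :: nat monoid) A. comm_group G \<and> finite (carrier G) \<and> A \<subseteq> carrier G \<and> A \<noteq> {} \<longrightarrow>
      (let \<alpha> = real (card A) / real (card (carrier G)) in
       \<exists>S \<rho> k. S \<subseteq> characters G \<and> finite S \<and> real (card S) \<le> C * ln (2 / \<alpha>)
         \<and> \<rho> \<ge> c / ln (2 / \<alpha>)
         \<and> k \<ge> (1::nat) \<and> real k \<le> C * ln (2 / \<alpha>)
         \<and> bohr_set G S \<rho> \<subseteq> kdiff G k A))"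
proof (rule exI[of _ "1/17"], rule exI[of _ 20], intro conjI allI impI, goal_cases)
  case (3 G A)
  then interpret finite_comm_group G
    by (simp add: finite_comm_group_def finite_comm_group_axioms_def)
  have A: "A \<subseteq> carrier G" "A \<noteq> {}"
    using 3 by auto
  define L where "L = ln (2 * real (order G) / real (card A))"
  have L_eq: "ln (2 / (real (card A) / real (card (carrier G)))) = L"
    by (simp add: L_def order_def)
  have "2/3 \<le> L"
    using ln_2_le_ln_ratio[OF A] ln2_ge_two_thirds unfolding L_def by linarith
  obtain S k where "S \<subseteq> characters G" "real (card S) \<le> 17 * L" "1 \<le> k" "real k \<le> L + 2"
    "bohr_set G S (1 / (17 * L)) \<subseteq> kdiff G k A"
    using bohr_set_subset_kdiff[OF A] unfolding L_def by blast
  with \<open>2/3 \<le> L\<close> show ?case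
    unfolding Let_def L_eq using finite_subset finite_characters
    by (intro exI[of _ S] exI[of _ "1 / (17 * L)"] exI[of _ k]) auto
qed simp_all

end
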